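(* Let $d\in\mathbb{N}_+$, $T>0$, and let $f\colon\mathbb{R}^d\times[0,T]\to\mathbb{R}^d$ be continuous in $t$ and such that there exists $L>0$ with $\|f(x,t)-f(y,t)\|\le L\|x-y\|$ for all $x,y\in\mathbb{R}^d$ and all $t\in[0,T]$. For $z_0\in\mathbb{R}^d$ let $\mathbf{z}_{z_0}\colon[0,T]\to\mathbb{R}^d$ be the solution of $\dot{\mathbf{z}}=f(\mathbf{z},t)$, $\mathbf{z}(0)=z_0$. Then for any compact set $K\subseteq\mathbb{R}^d$ and any $\varepsilon>0$ there exists a constant $P_{\varepsilon,T,K,f}$ such that for every integer $P\ge P_{\varepsilon,T,K,f}$ there exist parameters $(W_i,A_i^1,A_i^2,B_i)\in\mathbb{R}^d\times\mathbb{R}^{d\times d}\times\mathbb{R}^d\times\mathbb{R}^d$, $i=1,\dots,P$, such that $$\|\mathbf{z}_{z_0}(\cdot)-\mathbf{x}_{z_0}(\cdot)\|_{L^\infty([0,T];\mathbb{R}^d)}\le\varepsilon\quad\text{for all } z_0\in K,$$ where $\mathbf{x}_{z_0}\colon[0,T]\to\mathbb{R}^d$ is the solution of the semi-autonomous neural ODE $$\dot{\mathbf{x}}=\sum_{i=1}^P W_i\circ\boldsymbol{\sigma}(A_i^1\mathbf{x}+A_i^2 t+B_i),\qquad \mathbf{x}(0)=z_0.$$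
   Context: $\|\cdot\|$ is the Euclidean norm. $\circ$ denotes the Hadamard (componentwise) product of vectors. $\sigma(s)=\max\{s,0\}$ is the ReLU function and $\boldsymbol{\sigma}\colon\mathbb{R}^d\to\mathbb{R}^d$ applies $\sigma$ componentwise. The right-hand side of the neural ODE is globally Lipschitz in $\mathbf{x}$, so its solution exists and is unique on $[0,T]$. *)

theory Defs
  imports "HOL-Analysis.Analysis"
begin

definition relu :: "real \<Rightarrow> real" where
  "relu s = max s 0"

definition relu_vec :: "real ^ 'n \<Rightarrow> real ^ 'n" where
  "relu_vec v = (\<chi> j. relu (v $ j))"

definition hadamard :: "real ^ 'n \<Rightarrow> real ^ 'n \<Rightarrow> real ^ 'n" where
  "hadamard v w = (\<chi> j. v $ j * w $ j)"

definition is_solution ::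
  "(real ^ 'n \<Rightarrow> real \<Rightarrow> real ^ 'n) \<Rightarrow> real \<Rightarrow> real ^ 'n \<Rightarrow> (real \<Rightarrow> real ^ 'n) \<Rightarrow> bool" where
  "is_solution g T x0 x \<longleftrightarrow>
     x 0 = x0 \<and>
     (\<forall>t\<in>{0..T}. (x has_vector_derivative g (x t) t) (at t within {0..T}))"

definition neural_rhs ::
  "nat \<Rightarrow> (nat \<Rightarrow> real ^ 'n) \<Rightarrow> (nat \<Rightarrow> real ^ 'n ^ 'n) \<Rightarrow> (nat \<Rightarrow> real ^ 'n)
     \<Rightarrow> (nat \<Rightarrow> real ^ 'n) \<Rightarrow> real ^ 'n \<Rightarrow> real \<Rightarrow> real ^ 'n" where
  "neural_rhs P W A1 A2 B x t =
     (\<Sum>i\<in>{1..P}. hadamard (W i) (relu_vec (A1 i *v x + t *\<^sub>R A2 i + B i)))"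

end

theory Submission
  imports Defs
begin

(* On compact sets, the right-hand side f is uniformly approximated by finite sums of
   neurons w * relu (a \<bullet> x + b * t + c). By Stone-Weierstrass the sums of exponentials
   k * exp (a \<bullet> x + b * t) are dense; each such term is a continuous function of one real
   variable composed with a linear form, and on an interval that function is approximated
   by its piecewise linear interpolant, a combination of ramps relu s - relu (s - 1).
   Approximating each component of f separately, and padding with zero weights, gives for
   every P \<ge> P0 a neural right-hand side that is \<eta>-close to f on a ball containing all
   trajectories starting in K. By Gronwall, the two solutions then differ by at most
   \<eta> T e^(L T) as long as the neural trajectory stays in that ball, and a continuity
   argument shows that it never leaves it. *)

section \<open>Uniform density of shallow ReLU networks\<close>

inductive_set relu_nets :: "('a::real_inner \<Rightarrow> real) set" where
  net_zero: "(\<lambda>x. 0) \<in> relu_nets"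
| net_neuron: "(\<lambda>x. w * relu (a \<bullet> x + c)) \<in> relu_nets"
| net_add: "g \<in> relu_nets \<Longrightarrow> h \<in> relu_nets \<Longrightarrow> (\<lambda>x. g x + h x) \<in> relu_nets"

lemma relu_nets_sum:
  "finite A \<Longrightarrow> (\<And>i. i \<in> A \<Longrightarrow> g i \<in> relu_nets) \<Longrightarrow> (\<lambda>x. \<Sum>i\<in>A. g i x) \<in> relu_nets"
  by (induction A rule: finite_induct) (auto intro: relu_nets.intros)

lemma relu_nets_const: "(\<lambda>x. k) \<in> relu_nets"
  using relu_nets.net_neuron[of k 0 1] by (simp add: relu_def)

lemma relu_nets_compose_inner:
  fixes a :: "'a::real_inner"
  assumes "g \<in> relu_nets"
  shows "(\<lambda>x. g (a \<bullet> x)) \<in> relu_nets"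
  using assms
proof induction
  case (net_neuron w b c)
  have "(\<lambda>x. w * relu ((b *\<^sub>R a) \<bullet> x + c)) \<in> relu_nets"
    by (rule relu_nets.net_neuron)
  then show ?case by (simp add: inner_real_def)
qed (auto intro: relu_nets.intros)

lemma relu_nets_explicit:
  assumes "g \<in> relu_nets"
  shows "\<exists>(N::nat) w a c. g = (\<lambda>x. \<Sum>i\<in>{1..N}. w i * relu (a i \<bullet> x + c i))"
  using assms
proof induction
  case net_zero
  show ?case by (rule exI[of _ 0]) simp
next
  case (net_neuron w a c)
  show ?case by (rule exI[of _ 1]) (auto intro!: exI[of _ "\<lambda>_. _"])
next
  case (net_add g h)
  obtain M :: nat and w a c where g: "g = (\<lambda>x. \<Sum>i\<in>{1..M}. w i * relu (a i \<bullet> x + c i))"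
    using net_add.IH(1) by blast
  obtain N :: nat and w' a' c' where h: "h = (\<lambda>x. \<Sum>i\<in>{1..N}. w' i * relu (a' i \<bullet> x + c' i))"
    using net_add.IH(2) by blast
  define W where "W i = (if i \<le> M then w i else w' (i - M))" for i
  define A where "A i = (if i \<le> M then a i else a' (i - M))" for i
  define C where "C i = (if i \<le> M then c i else c' (i - M))" for i
  define neuron where "neuron x i = W i * relu (A i \<bullet> x + C i)" for x i
  have "g x + h x = (\<Sum>i\<in>{1..M + N}. neuron x i)" for x
  proof -
    have "(\<Sum>i\<in>{1..M + N}. neuron x i) = (\<Sum>i\<in>{1..M}. neuron x i) + (\<Sum>i\<in>{M + 1..M + N}. neuron x i)"
      by (rule sum.ub_add_nat) simp
    also have "(\<Sum>i\<in>{M + 1..M + N}. neuron x i) = (\<Sum>i\<in>{1..N}. neuron x (i + M))"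
      using sum.shift_bounds_cl_nat_ivl[of "neuron x" 1 M N] by (simp add: add.commute)
    finally show ?thesis
      unfolding g h by (simp add: neuron_def W_def A_def C_def)
  qed
  then show ?case unfolding neuron_def by blast
qed

definition ramp :: "real \<Rightarrow> real" where
  "ramp s = relu s - relu (s - 1)"

lemma ramp_eq_0: "s \<le> 0 \<Longrightarrow> ramp s = 0"
  by (simp add: ramp_def relu_def)

lemma ramp_eq_1: "1 \<le> s \<Longrightarrow> ramp s = 1"
  by (simp add: ramp_def relu_def)

lemma ramp_eq_self: "0 \<le> s \<Longrightarrow> s \<le> 1 \<Longrightarrow> ramp s = s"
  by (simp add: ramp_def relu_def)

lemma relu_nets_ramp: "(\<lambda>s. k * ramp (a * s + b)) \<in> relu_nets"
proof -
  have "(\<lambda>s. k * relu (a \<bullet> s + b) + (- k) * relu (a \<bullet> s + (b - 1))) \<in> relu_nets"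
    by (intro relu_nets.intros)
  then show ?thesis by (simp add: ramp_def inner_real_def algebra_simps)
qed

lemma ramp_sum_interpolates:
  fixes y :: "nat \<Rightarrow> real"
  assumes "m < n" "real m \<le> q" "q \<le> real m + 1"
  shows "y 0 + (\<Sum>k<n. (y (Suc k) - y k) * ramp (q - real k)) = y m + (q - real m) * (y (Suc m) - y m)"
proof -
  define step where "step k = (y (Suc k) - y k) * ramp (q - real k)" for k
  have below: "(\<Sum>k<m. step k) = y m - y 0"
  proof -
    have "(\<Sum>k<m. step k) = (\<Sum>k<m. y (Suc k) - y k)"
      using assms(2) by (intro sum.cong) (auto simp: step_def ramp_eq_1)
    then show ?thesis by (simp add: sum_lessThan_telescope)
  qed
  have above: "(\<Sum>k\<in>{Suc m..<n}. step k) = 0"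
    using assms(3) by (intro sum.neutral) (auto simp: step_def ramp_eq_0)
  have "(\<Sum>k<n. step k) = (\<Sum>k<m. step k) + step m + (\<Sum>k\<in>{Suc m..<n}. step k)"
    using assms(1) sum.atLeastLessThan_concat[of 0 m n step] sum.atLeast_Suc_lessThan[of m n step]
    by (simp add: atLeast0LessThan)
  also have "step m = (q - real m) * (y (Suc m) - y m)"
    using assms(2,3) by (simp add: step_def ramp_eq_self)
  finally show ?thesis
    unfolding step_def[symmetric] below above by simp
qed

lemma unit_interval_containing:
  assumes "0 < n" "0 \<le> q" "q \<le> real n"
  obtains m where "m < n" "real m \<le> q" "q \<le> real m + 1"
proof (cases "q < n")
  case True
  then show ?thesis
    using that[of "nat \<lfloor>q\<rfloor>"] \<open>0 \<le> q\<close> by linarith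
next
  case False
  then show ?thesis
    using that[of "n - 1"] assms by (simp add: of_nat_diff)
qed

lemma abs_convex_combination_less:
  fixes u v :: real
  assumes "0 \<le> \<theta>" "\<theta> \<le> 1" "\<bar>u\<bar> < e" "\<bar>v\<bar> < e"
  shows "\<bar>(1 - \<theta>) * u + \<theta> * v\<bar> < e"
proof -
  have "\<bar>(1 - \<theta>) * u + \<theta> * v\<bar> \<le> (1 - \<theta>) * \<bar>u\<bar> + \<theta> * \<bar>v\<bar>"
    using abs_triangle_ineq[of "(1 - \<theta>) * u" "\<theta> * v"] assms(1,2) by (simp add: abs_mult)
  also have "\<dots> < e"
    using assms by (intro convex_bound_lt) auto
  finally show ?thesis .
qed

lemma relu_nets_approx_interval:
  fixes h :: "real \<Rightarrow> real"
  assumes h: "continuous_on {lo..hi} h" and "lo < hi" "0 < e"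
  shows "\<exists>g\<in>relu_nets. \<forall>s\<in>{lo..hi}. \<bar>h s - g s\<bar> < e"
proof -
  obtain d where "0 < d" and d: "\<And>s s'. s \<in> {lo..hi} \<Longrightarrow> s' \<in> {lo..hi} \<Longrightarrow> \<bar>s' - s\<bar> < d \<Longrightarrow> \<bar>h s' - h s\<bar> < e"
    using compact_uniformly_continuous[OF h compact_Icc] \<open>0 < e\<close>
    unfolding uniformly_continuous_on_def dist_real_def by metis
  obtain n :: nat where n: "(hi - lo) / d < n"
    using reals_Archimedean2 by blast
  then have "0 < n"
    using \<open>lo < hi\<close> \<open>0 < d\<close> by (metis divide_pos_pos diff_gt_0_iff_gt of_nat_0_less_iff order.strict_trans)
  define D where "D = (hi - lo) / n"
  have "0 < D" "D < d"
    using n \<open>0 < n\<close> \<open>lo < hi\<close> \<open>0 < d\<close> by (auto simp: D_def field_simps)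
  define node where "node k = lo + real k * D" for k
  have node_in: "node k \<in> {lo..hi}" if "k \<le> n" for k
  proof -
    have "real k * D \<le> real n * D"
      using that \<open>0 < D\<close> by (simp add: mult_right_mono)
    also have "real n * D = hi - lo"
      using \<open>0 < n\<close> by (simp add: D_def)
    finally show ?thesis
      using \<open>0 < D\<close> by (simp add: node_def)
  qed
  define y where "y k = h (node k)" for k
  \<comment> \<open>the piecewise linear interpolant of h at the nodes\<close>
  define g where "g s = y 0 + (\<Sum>k<n. (y (Suc k) - y k) * ramp ((s - lo) / D - real k))" for s
  have "(\<lambda>s. y 0 + (\<Sum>k<n. (y (Suc k) - y k) * ramp ((1 / D) * s + (- lo / D - real k)))) \<in> relu_nets"
    by (intro relu_nets.net_add relu_nets_const relu_nets_sum relu_nets_ramp) auto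
  moreover have "(s - lo) / D - real k = (1 / D) * s + (- lo / D - real k)" for s k
    by (simp add: diff_divide_distrib)
  ultimately have "g \<in> relu_nets"
    unfolding g_def by presburger
  moreover have "\<bar>h s - g s\<bar> < e" if s: "s \<in> {lo..hi}" for s
  proof -
    define q where "q = (s - lo) / D"
    have "0 \<le> q" "q \<le> n"
      using s \<open>0 < D\<close> \<open>0 < n\<close> by (auto simp: q_def D_def field_simps)
    obtain m where m: "m < n" "real m \<le> q" "q \<le> real m + 1"
      using unit_interval_containing[OF \<open>0 < n\<close> \<open>0 \<le> q\<close> \<open>q \<le> n\<close>] .
    define \<theta> where "\<theta> = q - real m"
    have "g s = y m + \<theta> * (y (Suc m) - y m)"
      using ramp_sum_interpolates[OF m] by (simp add: g_def \<theta>_def q_def)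
    then have "h s - g s = (1 - \<theta>) * (h s - h (node m)) + \<theta> * (h s - h (node (Suc m)))"
      by (simp add: y_def algebra_simps)
    moreover have "\<bar>s - node m\<bar> \<le> D" "\<bar>s - node (Suc m)\<bar> \<le> D"
      using m \<open>0 < D\<close> by (auto simp: q_def node_def field_simps)
    then have "\<bar>h s - h (node m)\<bar> < e" "\<bar>h s - h (node (Suc m))\<bar> < e"
      using d[OF node_in s] \<open>D < d\<close> m(1) by auto
    ultimately show ?thesis
      using m by (simp add: abs_convex_combination_less \<theta>_def)
  qed
  ultimately show ?thesis by blast
qed

lemma relu_nets_approx_ridge:
  fixes a :: "'a::real_inner" and h :: "real \<Rightarrow> real"
  assumes "compact D" "continuous_on UNIV h" "0 < e"
  shows "\<exists>g\<in>relu_nets. \<forall>x\<in>D. \<bar>h (a \<bullet> x) - g x\<bar> < e"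
proof -
  have "compact ((\<lambda>x. a \<bullet> x) ` D)"
    using \<open>compact D\<close> by (intro compact_continuous_image continuous_intros)
  then obtain M where M: "\<And>x. x \<in> D \<Longrightarrow> \<bar>a \<bullet> x\<bar> \<le> M"
    by (fastforce dest: compact_imp_bounded simp: bounded_iff)
  have "continuous_on {-\<bar>M\<bar> - 1..\<bar>M\<bar> + 1} h"
    using assms(2) by (rule continuous_on_subset) simp
  then obtain g where "g \<in> relu_nets" and g: "\<forall>s\<in>{-\<bar>M\<bar> - 1..\<bar>M\<bar> + 1}. \<bar>h s - g s\<bar> < e"
    using relu_nets_approx_interval \<open>0 < e\<close> by fastforce
  have "\<forall>x\<in>D. \<bar>h (a \<bullet> x) - g (a \<bullet> x)\<bar> < e"
    using g M by fastforce
  then show ?thesis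
    using relu_nets_compose_inner[OF \<open>g \<in> relu_nets\<close>, of a] by (intro bexI) auto
qed

inductive_set exp_sums :: "('a::real_inner \<Rightarrow> real) set" where
  exp_term: "(\<lambda>x. k * exp (a \<bullet> x)) \<in> exp_sums"
| exp_add: "g \<in> exp_sums \<Longrightarrow> h \<in> exp_sums \<Longrightarrow> (\<lambda>x. g x + h x) \<in> exp_sums"

lemma exp_sums_const: "(\<lambda>x. k) \<in> exp_sums"
  using exp_sums.exp_term[of k 0] by simp

lemma exp_sums_continuous: "g \<in> exp_sums \<Longrightarrow> continuous_on D g"
  by (induction rule: exp_sums.induct) (auto intro!: continuous_intros)

lemma exp_sums_mult:
  assumes "g \<in> exp_sums" "h \<in> exp_sums"
  shows "(\<lambda>x. g x * h x) \<in> exp_sums"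
  using assms
proof induction
  case (exp_term k a)
  from \<open>h \<in> exp_sums\<close> show ?case
  proof induction
    case (exp_term k' a')
    have "(\<lambda>x. k * exp (a \<bullet> x) * (k' * exp (a' \<bullet> x))) = (\<lambda>x. (k * k') * exp ((a + a') \<bullet> x))"
      by (simp add: fun_eq_iff inner_add_left mult_exp_exp)
    then show ?case
      using exp_sums.exp_term by metis
  qed (auto simp: distrib_left intro: exp_sums.exp_add)
qed (auto simp: distrib_right intro: exp_sums.exp_add)

lemma exp_sums_separate_points:
  fixes x y :: "'a::real_inner"
  assumes "x \<noteq> y"
  shows "\<exists>g\<in>exp_sums. g x \<noteq> g y"
proof -
  have "(x - y) \<bullet> x - (x - y) \<bullet> y = (x - y) \<bullet> (x - y)"
    by (simp add: inner_diff)
  then have "exp ((x - y) \<bullet> x) \<noteq> exp ((x - y) \<bullet> y)"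
    using assms by auto
  then show ?thesis
    using exp_sums.exp_term[of 1 "x - y"] by fastforce
qed

lemma exp_sums_approx_by_relu_nets:
  assumes "compact D" "g \<in> exp_sums" "0 < e"
  shows "\<exists>h\<in>relu_nets. \<forall>x\<in>D. \<bar>g x - h x\<bar> < e"
  using assms(2,3)
proof (induction arbitrary: e)
  case (exp_term k a)
  have "continuous_on UNIV (\<lambda>s. k * exp s)"
    by (intro continuous_intros)
  from relu_nets_approx_ridge[OF \<open>compact D\<close> this exp_term.prems, of a]
  show ?case by simp
next
  case (exp_add g1 g2)
  obtain h1 where "h1 \<in> relu_nets" and h1: "\<forall>x\<in>D. \<bar>g1 x - h1 x\<bar> < e / 2"
    using exp_add.IH(1)[of "e / 2"] \<open>0 < e\<close> by auto
  obtain h2 where "h2 \<in> relu_nets" and h2: "\<forall>x\<in>D. \<bar>g2 x - h2 x\<bar> < e / 2"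
    using exp_add.IH(2)[of "e / 2"] \<open>0 < e\<close> by auto
  have "\<bar>(g1 x + g2 x) - (h1 x + h2 x)\<bar> < e" if "x \<in> D" for x
  proof -
    have "\<bar>g1 x - h1 x\<bar> < e / 2" "\<bar>g2 x - h2 x\<bar> < e / 2"
      using h1 h2 that by auto
    then show ?thesis by arith
  qed
  then show ?case
    using relu_nets.net_add[OF \<open>h1 \<in> relu_nets\<close> \<open>h2 \<in> relu_nets\<close>] by (intro bexI) auto
qed

theorem relu_nets_uniformly_dense:
  fixes f :: "'a::real_inner \<Rightarrow> real"
  assumes "compact D" "continuous_on D f" "0 < e"
  shows "\<exists>h\<in>relu_nets. \<forall>x\<in>D. \<bar>f x - h x\<bar> < e"
proof -
  have "\<exists>g. g \<in> exp_sums \<and> (\<forall>x\<in>D. \<bar>f x - g x\<bar> < e / 2)"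
    by (rule Stone_Weierstrass_HOL[OF \<open>compact D\<close>])
      (use assms exp_sums_separate_points in \<open>auto intro: exp_sums_const exp_sums_continuous
        exp_sums.exp_add exp_sums_mult\<close>)
  then obtain g where "g \<in> exp_sums" and g: "\<forall>x\<in>D. \<bar>f x - g x\<bar> < e / 2"
    by blast
  obtain h where "h \<in> relu_nets" and h: "\<forall>x\<in>D. \<bar>g x - h x\<bar> < e / 2"
    using exp_sums_approx_by_relu_nets[OF \<open>compact D\<close> \<open>g \<in> exp_sums\<close>, of "e / 2"] \<open>0 < e\<close>
    by auto
  have "\<bar>f x - h x\<bar> < e" if "x \<in> D" for x
  proof -
    have "\<bar>f x - g x\<bar> < e / 2" "\<bar>g x - h x\<bar> < e / 2"
      using g h that by auto
    then show ?thesis by arith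
  qed
  then show ?thesis
    using \<open>h \<in> relu_nets\<close> by blast
qed

corollary relu_sums_uniformly_dense:
  fixes f :: "'a::real_inner \<Rightarrow> real"
  assumes "compact D" "continuous_on D f" "0 < e"
  shows "\<exists>(N::nat) w a c. \<forall>x\<in>D. \<bar>f x - (\<Sum>i\<in>{1..N}. w i * relu (a i \<bullet> x + c i))\<bar> < e"
proof -
  obtain h where "h \<in> relu_nets" and h: "\<forall>x\<in>D. \<bar>f x - h x\<bar> < e"
    using relu_nets_uniformly_dense[OF assms] by blast
  obtain N :: nat and w a c where "h = (\<lambda>x. \<Sum>i\<in>{1..N}. w i * relu (a i \<bullet> x + c i))"
    using relu_nets_explicit[OF \<open>h \<in> relu_nets\<close>] by blast
  with h show ?thesis
    by blast
qed

lemma neural_rhs_component: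
  "neural_rhs P W A1 A2 B x t $ j =
     (\<Sum>i\<in>{1..P}. W i $ j * relu (A1 i $ j \<bullet> x + t * A2 i $ j + B i $ j))"
  by (simp add: neural_rhs_def sum_component hadamard_def relu_vec_def matrix_vector_mul_component)

lemma neural_rhs_zero_padded:
  fixes a :: "'n \<Rightarrow> nat \<Rightarrow> real \<times> (real ^ 'n)"
  assumes "N j \<le> P"
  shows "neural_rhs P (\<lambda>i. \<chi> j. if i \<le> N j then w j i else 0) (\<lambda>i. \<chi> j. snd (a j i))
           (\<lambda>i. \<chi> j. fst (a j i)) (\<lambda>i. \<chi> j. c j i) x t $ j
         = (\<Sum>i\<in>{1..N j}. w j i * relu (a j i \<bullet> (t, x) + c j i))"
proof -
  have inner_pair: "u \<bullet> (t, x) = fst u * t + snd u \<bullet> x" for u :: "real \<times> (real ^ 'n)"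
    by (cases u) simp
  have "neural_rhs P (\<lambda>i. \<chi> j. if i \<le> N j then w j i else 0) (\<lambda>i. \<chi> j. snd (a j i))
          (\<lambda>i. \<chi> j. fst (a j i)) (\<lambda>i. \<chi> j. c j i) x t $ j
      = (\<Sum>i\<in>{1..P}. if i \<le> N j then w j i * relu (a j i \<bullet> (t, x) + c j i) else 0)"
    unfolding neural_rhs_component inner_pair by (intro sum.cong) (simp_all add: algebra_simps)
  also have "\<dots> = (\<Sum>i\<in>{i\<in>{1..P}. i \<le> N j}. w j i * relu (a j i \<bullet> (t, x) + c j i))"
    by (rule sum.inter_filter[symmetric]) simp
  also have "{i\<in>{1..P}. i \<le> N j} = {1..N j}"
    using assms by auto
  finally show ?thesis .
qed

lemma neural_rhs_uniform_approx:
  fixes F :: "real \<times> (real ^ 'n) \<Rightarrow> real ^ 'n"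
  assumes "compact D" "continuous_on D F" "0 < e"
  shows "\<exists>P0. \<forall>P\<ge>P0. \<exists>W A1 A2 B. \<forall>(t, x)\<in>D. norm (F (t, x) - neural_rhs P W A1 A2 B x t) \<le> e"
proof -
  define e' where "e' = e / CARD('n)"
  have "0 < e'"
    using \<open>0 < e\<close> by (simp add: e'_def)
  have "\<forall>j. \<exists>(N::nat) w a c. \<forall>p\<in>D. \<bar>F p $ j - (\<Sum>i\<in>{1..N}. w i * relu (a i \<bullet> p + c i))\<bar> < e'"
    using relu_sums_uniformly_dense[OF \<open>compact D\<close> continuous_on_component[OF assms(2)] \<open>0 < e'\<close>]
    by blast
  then have "\<exists>(N :: 'n \<Rightarrow> nat) w a c. \<forall>j. \<forall>p\<in>D.
      \<bar>F p $ j - (\<Sum>i\<in>{1..N j}. w j i * relu (a j i \<bullet> p + c j i))\<bar> < e'"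
    by (simp only: choice_iff)
  then obtain N :: "'n \<Rightarrow> nat" and w a c where approx:
    "\<And>j p. p \<in> D \<Longrightarrow> \<bar>F p $ j - (\<Sum>i\<in>{1..N j}. w j i * relu (a j i \<bullet> p + c j i))\<bar> < e'"
    by blast
  show ?thesis
  proof (rule exI[of _ "Max (range N)"], intro allI impI)
    fix P assume "Max (range N) \<le> P"
    then have "N j \<le> P" for j
      using Max_ge[of "range N" "N j"] by simp
    define G where "G = neural_rhs P (\<lambda>i. \<chi> j. if i \<le> N j then w j i else 0) (\<lambda>i. \<chi> j. snd (a j i))
      (\<lambda>i. \<chi> j. fst (a j i)) (\<lambda>i. \<chi> j. c j i)"
    have "norm (F (t, x) - G x t) \<le> e" if "(t, x) \<in> D" for t x
    proof -
      have "norm (F (t, x) - G x t) \<le> (\<Sum>j\<in>UNIV. \<bar>(F (t, x) - G x t) $ j\<bar>)"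
        by (rule norm_le_l1_cart)
      also have "\<dots> \<le> (\<Sum>j\<in>(UNIV :: 'n set). e')"
      proof (rule sum_mono)
        fix j
        show "\<bar>(F (t, x) - G x t) $ j\<bar> \<le> e'"
          using approx[OF that, of j] neural_rhs_zero_padded[where N=N and w=w and a=a and c=c, OF \<open>N j \<le> P\<close>]
          by (simp add: G_def)
      qed
      finally show ?thesis
        by (simp add: e'_def)
    qed
    then show "\<exists>W A1 A2 B. \<forall>(t, x)\<in>D. norm (F (t, x) - neural_rhs P W A1 A2 B x t) \<le> e"
      unfolding G_def by blast
  qed
qed

section \<open>Continuous dependence on the right-hand side\<close>

lemma gronwall_integral:
  fixes u :: "real \<Rightarrow> real"
  assumes u: "continuous_on {0..S} u" and "0 \<le> C" "0 \<le> L"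
    and le: "\<And>t. t \<in> {0..S} \<Longrightarrow> u t \<le> C + L * integral {0..t} u"
    and t: "t \<in> {0..S}"
  shows "u t \<le> C * exp (L * t)"
proof -
  define v where "v r = integral {0..r} u" for r
  define h where "h r = exp (- L * r) * (C + L * v r)" for r
  define h' where "h' r = exp (- L * r) * (L * (u r - (C + L * v r)))" for r
  have "(h has_vector_derivative h' r) (at r within {0..t})" if "r \<in> {0..t}" for r
  proof -
    have "r \<in> {0..S}"
      using that t by auto
    then have "(v has_real_derivative u r) (at r within {0..S})"
      unfolding v_def has_real_derivative_iff_has_vector_derivative
      by (rule integral_has_vector_derivative[OF u])
    then have "(h has_real_derivative exp (- L * r) * (- L) * (C + L * v r) + exp (- L * r) * (L * u r))
        (at r within {0..S})"
      unfolding h_def by (auto intro!: derivative_eq_intros)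
    then have "(h has_real_derivative h' r) (at r within {0..S})"
      by (simp add: h'_def algebra_simps)
    then show ?thesis
      unfolding has_real_derivative_iff_has_vector_derivative
      by (rule has_vector_derivative_within_subset) (use t in auto)
  qed
  then have "(h' has_integral (h t - h 0)) {0..t}"
    using t by (intro fundamental_theorem_of_calculus) auto
  moreover have "h' r \<le> 0" if "r \<in> {0..t}" for r
  proof -
    have "u r - (C + L * v r) \<le> 0"
      using le[of r] that t by (auto simp: v_def)
    then show ?thesis
      using \<open>0 \<le> L\<close> by (simp add: h'_def mult_nonneg_nonpos)
  qed
  ultimately have "h t - h 0 \<le> 0"
    using has_integral_le[OF _ has_integral_0] by blast
  then have "C + L * v t \<le> C * exp (L * t)"
    by (simp add: h_def v_def exp_minus field_simps)
  then show ?thesis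
    using le[OF t] by (simp add: v_def)
qed

lemma gronwall_deviation_bound:
  fixes e :: "real \<Rightarrow> 'a::banach"
  assumes "0 \<le> t" "0 \<le> a" "0 \<le> L" "e 0 = 0"
    and deriv: "\<And>s. s \<in> {0..t} \<Longrightarrow> (e has_vector_derivative e' s) (at s within {0..t})"
    and bound: "\<And>s. s \<in> {0..t} \<Longrightarrow> norm (e' s) \<le> a + L * norm (e s)"
  shows "norm (e t) \<le> a * t * exp (L * t)"
proof -
  have e_cont: "continuous_on {0..t} e"
    using deriv by (rule continuous_on_vector_derivative)
  then have u: "continuous_on {0..t} (\<lambda>s. norm (e s))"
    by (intro continuous_intros)
  have "norm (e r) \<le> a * t + L * integral {0..r} (\<lambda>s. norm (e s))" if r: "r \<in> {0..t}" for r
  proof -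
    have sub: "{0..r} \<subseteq> {0..t}"
      using r by auto
    have FTC: "(e' has_integral (e r - e 0)) {0..r}"
      using r deriv has_vector_derivative_within_subset[OF deriv sub] sub
      by (intro fundamental_theorem_of_calculus) auto
    then have "e' integrable_on {0..r}"
      by blast
    have "norm (e r) = norm (integral {0..r} e')"
      using FTC \<open>e 0 = 0\<close> by (simp add: integral_unique)
    also have "\<dots> \<le> integral {0..r} (\<lambda>s. a + L * norm (e s))"
      using bound sub continuous_on_subset[OF e_cont sub]
      by (intro integral_norm_bound_integral \<open>e' integrable_on {0..r}\<close> integrable_continuous_real continuous_intros) auto
    also have "\<dots> = a * r + L * integral {0..r} (\<lambda>s. norm (e s))"
      using r continuous_on_subset[OF e_cont sub]
      by (simp add: integral_add integrable_continuous_real continuous_intros)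
    also have "\<dots> \<le> a * t + L * integral {0..r} (\<lambda>s. norm (e s))"
      using r \<open>0 \<le> a\<close> by (simp add: mult_left_mono)
    finally show ?thesis .
  qed
  then show ?thesis
    using gronwall_integral[OF u _ \<open>0 \<le> L\<close>, of "a * t" t] \<open>0 \<le> t\<close> \<open>0 \<le> a\<close> by simp
qed

lemma continuous_bootstrap:
  fixes u :: "real \<Rightarrow> real"
  assumes u: "continuous_on {0..T} u" and "u 0 < c" "b < c"
    and step: "\<And>S. S \<in> {0..T} \<Longrightarrow> \<forall>s\<in>{0..S}. u s < c \<Longrightarrow> \<forall>s\<in>{0..S}. u s \<le> b"
  shows "\<forall>t\<in>{0..T}. u t \<le> b"
proof (cases "0 \<le> T")
  case True
  have "\<forall>t\<in>{0..T}. u t < c"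
  proof (rule ccontr)
    assume "\<not> (\<forall>t\<in>{0..T}. u t < c)"
    define X where "X = {0..T} \<inter> u -` {c..}"
    have "X \<noteq> {}" "bdd_below X"
      using \<open>\<not> (\<forall>t\<in>{0..T}. u t < c)\<close> by (auto simp: X_def not_less intro: bdd_belowI[of _ 0])
    moreover have "closed X"
      unfolding X_def by (intro continuous_closed_preimage u) auto
    ultimately have "Inf X \<in> X"
      by (rule closed_contains_Inf)
    define t1 where "t1 = Inf X"
    have "t1 \<in> {0..T}" "c \<le> u t1"
      using \<open>Inf X \<in> X\<close> by (auto simp: X_def t1_def)
    then have "0 < t1"
      using \<open>u 0 < c\<close> by (cases "t1 = 0") auto
    have below: "u s < c" if "s \<in> {0..<t1}" for s
      using that cInf_lower[OF _ \<open>bdd_below X\<close>, of s] \<open>t1 \<in> {0..T}\<close>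
      by (force simp: X_def t1_def)
    have "{0..<t1} \<subseteq> {0..t1} \<inter> u -` {..b}"
    proof
      fix s assume "s \<in> {0..<t1}"
      then have "\<forall>r\<in>{0..s}. u r \<le> b"
        using step[of s] below \<open>t1 \<in> {0..T}\<close> by auto
      then show "s \<in> {0..t1} \<inter> u -` {..b}"
        using \<open>s \<in> {0..<t1}\<close> by auto
    qed
    moreover have "closed ({0..t1} \<inter> u -` {..b})"
      using \<open>t1 \<in> {0..T}\<close> by (intro continuous_closed_preimage continuous_on_subset[OF u]) auto
    ultimately have "closure {0..<t1} \<subseteq> {0..t1} \<inter> u -` {..b}"
      by (rule closure_minimal)
    then have "t1 \<in> {0..t1} \<inter> u -` {..b}"
      by (rule subsetD) (use \<open>0 < t1\<close> in simp)
    then have "u t1 \<le> b"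
      by simp
    then show False
      using \<open>c \<le> u t1\<close> \<open>b < c\<close> by simp
  qed
  then show ?thesis
    using step[of T] True by auto
qed simp

lemma is_solution_continuous: "is_solution g T x0 x \<Longrightarrow> continuous_on {0..T} x"
  unfolding is_solution_def by (auto intro: continuous_on_vector_derivative)

lemma is_solution_has_vector_derivative:
  assumes "is_solution g T x0 x" "t \<le> T" "s \<in> {0..t}"
  shows "(x has_vector_derivative g (x s) s) (at s within {0..t})"
proof -
  have "(x has_vector_derivative g (x s) s) (at s within {0..T})"
    using assms unfolding is_solution_def by auto
  then show ?thesis
    by (rule has_vector_derivative_within_subset) (use assms in auto)
qed

lemma continuous_on_Times_if_lipschitz:
  fixes f :: "'a::metric_space \<Rightarrow> 'b::metric_space \<Rightarrow> 'c::metric_space"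
  assumes "\<And>x. continuous_on T (f x)" "\<And>t. t \<in> T \<Longrightarrow> L-lipschitz_on UNIV (\<lambda>x. f x t)"
  shows "continuous_on (T \<times> UNIV) (\<lambda>(t, x). f x t)"
proof (rule continuous_on_TimesI)
  show "local_lipschitz T UNIV (\<lambda>t x. f x t)"
    using assms(2) by (intro local_lipschitzI) (meson IntD2 lipschitz_on_subset subset_UNIV zero_less_one)
qed (use assms(1) in auto)

lemma solutions_bounded:
  fixes f :: "real ^ 'n \<Rightarrow> real \<Rightarrow> real ^ 'n"
  assumes "0 \<le> T" "compact K"
    and f_cont: "continuous_on ({0..T} \<times> K) (\<lambda>(t, x). f x t)"
    and f_lip: "\<And>t. t \<in> {0..T} \<Longrightarrow> L-lipschitz_on UNIV (\<lambda>x. f x t)"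
  shows "\<exists>R. \<forall>z0\<in>K. \<forall>z. is_solution f T z0 z \<longrightarrow> (\<forall>t\<in>{0..T}. norm (z t) \<le> R)"
proof -
  have "0 \<le> L"
    using f_lip[of 0] \<open>0 \<le> T\<close> by (auto intro: lipschitz_on_nonneg)
  have "compact ((\<lambda>(t, x). f x t) ` ({0..T} \<times> K))"
    using assms by (intro compact_continuous_image compact_Times) auto
  then obtain M where "0 < M" and M: "\<And>t x. t \<in> {0..T} \<Longrightarrow> x \<in> K \<Longrightarrow> norm (f x t) \<le> M"
    by (fastforce dest: compact_imp_bounded simp: bounded_pos)
  obtain RK where RK: "\<And>x. x \<in> K \<Longrightarrow> norm x \<le> RK"
    using compact_imp_bounded[OF \<open>compact K\<close>] by (auto simp: bounded_iff)
  have "norm (z t) \<le> RK + M * T * exp (L * T)"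
    if "z0 \<in> K" "is_solution f T z0 z" "t \<in> {0..T}" for z0 z t
  proof -
    have "norm (z t - z0) \<le> M * t * exp (L * t)"
    proof (rule gronwall_deviation_bound[where e'="\<lambda>s. f (z s) s"])
      fix s assume s: "s \<in> {0..t}"
      then show "((\<lambda>s. z s - z0) has_vector_derivative f (z s) s) (at s within {0..t})"
        using is_solution_has_vector_derivative[OF \<open>is_solution f T z0 z\<close>] \<open>t \<in> {0..T}\<close>
        by (auto intro!: derivative_eq_intros)
      have "s \<in> {0..T}"
        using s \<open>t \<in> {0..T}\<close> by auto
      then have "norm (f (z s) s) \<le> norm (f z0 s) + norm (f (z s) s - f z0 s)"
        using norm_triangle_sub by blast
      also have "\<dots> \<le> M + L * norm (z s - z0)"
        using M[OF \<open>s \<in> {0..T}\<close> \<open>z0 \<in> K\<close>] lipschitz_on_normD[OF f_lip[OF \<open>s \<in> {0..T}\<close>]]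
        by (intro add_mono) auto
      finally show "norm (f (z s) s) \<le> M + L * norm (z s - z0)" .
    qed (use that \<open>0 < M\<close> \<open>0 \<le> L\<close> in \<open>auto simp: is_solution_def\<close>)
    also have "\<dots> \<le> M * T * exp (L * T)"
      using that \<open>0 < M\<close> \<open>0 \<le> L\<close> by (intro mult_mono) (auto intro: mult_left_mono)
    finally show ?thesis
      using RK[OF \<open>z0 \<in> K\<close>] norm_triangle_sub[of "z t" z0] by linarith
  qed
  then show ?thesis by blast
qed

text \<open>While x stays within \<delta> of z it stays where g approximates f, so Gronwall bounds the
  deviation by \<eta> T exp (L T) < \<delta>; by continuity x can therefore never get \<delta> away from z.\<close>

lemma solution_perturbation:
  fixes f g :: "real ^ 'n \<Rightarrow> real \<Rightarrow> real ^ 'n"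
  assumes "0 \<le> T" "0 \<le> \<eta>"
    and f_lip: "\<And>t. t \<in> {0..T} \<Longrightarrow> L-lipschitz_on UNIV (\<lambda>y. f y t)"
    and close: "\<And>y t. norm y \<le> R + \<delta> \<Longrightarrow> t \<in> {0..T} \<Longrightarrow> norm (f y t - g y t) \<le> \<eta>"
    and small: "\<eta> * T * exp (L * T) < \<delta>"
    and z: "is_solution f T z0 z" and z_bound: "\<And>t. t \<in> {0..T} \<Longrightarrow> norm (z t) \<le> R"
    and x: "is_solution g T z0 x"
  shows "\<forall>t\<in>{0..T}. norm (z t - x t) \<le> \<eta> * T * exp (L * T)"
proof (rule continuous_bootstrap[where c=\<delta>])
  have "0 \<le> L"
    using f_lip[of 0] \<open>0 \<le> T\<close> by (auto intro: lipschitz_on_nonneg)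
  show "continuous_on {0..T} (\<lambda>t. norm (z t - x t))"
    using is_solution_continuous[OF z] is_solution_continuous[OF x] by (intro continuous_intros)
  have "0 \<le> \<eta> * T * exp (L * T)"
    using \<open>0 \<le> T\<close> \<open>0 \<le> \<eta>\<close> by simp
  then show "norm (z 0 - x 0) < \<delta>"
    using z x small by (simp add: is_solution_def)
  fix S assume "S \<in> {0..T}" and near: "\<forall>s\<in>{0..S}. norm (z s - x s) < \<delta>"
  show "\<forall>t\<in>{0..S}. norm (z t - x t) \<le> \<eta> * T * exp (L * T)"
  proof
    fix t assume "t \<in> {0..S}"
    then have "t \<in> {0..T}"
      using \<open>S \<in> {0..T}\<close> by auto
    have "norm (z t - x t) \<le> \<eta> * t * exp (L * t)"
    proof (rule gronwall_deviation_bound[where e'="\<lambda>s. f (z s) s - g (x s) s"])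
      fix s assume s: "s \<in> {0..t}"
      then show "((\<lambda>s. z s - x s) has_vector_derivative f (z s) s - g (x s) s) (at s within {0..t})"
        using is_solution_has_vector_derivative[OF z] is_solution_has_vector_derivative[OF x] \<open>t \<in> {0..T}\<close>
        by (auto intro!: derivative_eq_intros)
      have "s \<in> {0..T}" "norm (z s - x s) < \<delta>"
        using s \<open>t \<in> {0..S}\<close> \<open>S \<in> {0..T}\<close> near by auto
      then have "norm (x s) \<le> R + \<delta>"
        using z_bound[of s] norm_triangle_sub[of "x s" "z s"] norm_minus_commute[of "z s" "x s"] by linarith
      have "norm (f (z s) s - g (x s) s) \<le> norm (f (x s) s - g (x s) s) + norm (f (z s) s - f (x s) s)"
        using norm_triangle_ineq[of "f (x s) s - g (x s) s" "f (z s) s - f (x s) s"] by simp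
      also have "\<dots> \<le> \<eta> + L * norm (z s - x s)"
        using close[OF \<open>norm (x s) \<le> R + \<delta>\<close> \<open>s \<in> {0..T}\<close>] lipschitz_on_normD[OF f_lip[OF \<open>s \<in> {0..T}\<close>]]
        by (intro add_mono) auto
      finally show "norm (f (z s) s - g (x s) s) \<le> \<eta> + L * norm (z s - x s)" .
    qed (use \<open>t \<in> {0..S}\<close> z x \<open>0 \<le> \<eta>\<close> \<open>0 \<le> L\<close> in \<open>auto simp: is_solution_def\<close>)
    also have "\<dots> \<le> \<eta> * T * exp (L * T)"
      using \<open>t \<in> {0..T}\<close> \<open>0 \<le> \<eta>\<close> \<open>0 \<le> L\<close> by (intro mult_mono) (auto intro: mult_left_mono)
    finally show "norm (z t - x t) \<le> \<eta> * T * exp (L * T)" .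
  qed
qed (use small in auto)

lemma solutions_stable_under_rhs_perturbation:
  fixes f :: "real ^ 'n \<Rightarrow> real \<Rightarrow> real ^ 'n"
  assumes "0 < T" "compact K" "0 < \<epsilon>"
    and f_cont: "continuous_on ({0..T} \<times> K) (\<lambda>(t, x). f x t)"
    and f_lip: "\<And>t. t \<in> {0..T} \<Longrightarrow> L-lipschitz_on UNIV (\<lambda>x. f x t)"
  shows "\<exists>R \<eta>. 0 < \<eta> \<and> (\<forall>g. (\<forall>t\<in>{0..T}. \<forall>y\<in>cball 0 R. norm (f y t - g y t) \<le> \<eta>) \<longrightarrow>
           (\<forall>z0\<in>K. \<forall>z x. is_solution f T z0 z \<and> is_solution g T z0 x \<longrightarrow> (\<forall>t\<in>{0..T}. norm (z t - x t) \<le> \<epsilon>)))"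
proof -
  obtain R where R: "\<forall>z0\<in>K. \<forall>z. is_solution f T z0 z \<longrightarrow> (\<forall>t\<in>{0..T}. norm (z t) \<le> R)"
    using solutions_bounded[OF _ \<open>compact K\<close> f_cont f_lip] \<open>0 < T\<close> by auto
  define \<eta> where "\<eta> = min \<epsilon> 1 / (2 * T * exp (L * T))"
  have "0 < \<eta>" and "\<eta> * T * exp (L * T) = min \<epsilon> 1 / 2"
    using \<open>0 < T\<close> \<open>0 < \<epsilon>\<close> by (auto simp: \<eta>_def)
  then have small: "\<eta> * T * exp (L * T) < 1" and "\<eta> * T * exp (L * T) < \<epsilon>"
    using \<open>0 < \<epsilon>\<close> by (auto simp: min_def split: if_splits)
  have "norm (z t - x t) \<le> \<epsilon>"
    if close: "\<forall>t\<in>{0..T}. \<forall>y\<in>cball 0 (R + 1). norm (f y t - g y t) \<le> \<eta>"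
      and "z0 \<in> K" "is_solution f T z0 z" "is_solution g T z0 x" "t \<in> {0..T}"
    for g z0 z x t
  proof -
    have z_bound: "norm (z s) \<le> R" if "s \<in> {0..T}" for s
      using R \<open>z0 \<in> K\<close> \<open>is_solution f T z0 z\<close> that by blast
    have close': "norm (f y s - g y s) \<le> \<eta>" if "norm y \<le> R + 1" "s \<in> {0..T}" for y s
      using close that by auto
    have "\<forall>s\<in>{0..T}. norm (z s - x s) \<le> \<eta> * T * exp (L * T)"
      by (rule solution_perturbation[OF _ _ f_lip close' small that(3) z_bound that(4)])
        (use \<open>0 < T\<close> \<open>0 < \<eta>\<close> in auto)
    then have "norm (z t - x t) \<le> \<eta> * T * exp (L * T)"
      using \<open>t \<in> {0..T}\<close> by blast
    then show ?thesis
      using \<open>\<eta> * T * exp (L * T) < \<epsilon>\<close> by linarith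
  qed
  then show ?thesis
    using \<open>0 < \<eta>\<close> by blast
qed

theorem theorem2p1:
  fixes f :: "real ^ 'n \<Rightarrow> real \<Rightarrow> real ^ 'n"
    and T :: real and K :: "(real ^ 'n) set" and \<epsilon> :: real
  assumes T_pos: "T > 0"
    and f_cont: "\<And>x. continuous_on {0..T} (f x)"
    and f_lip: "\<exists>L > 0. \<forall>x y. \<forall>t\<in>{0..T}. norm (f x t - f y t) \<le> L * norm (x - y)"
    and K_compact: "compact K"
    and eps_pos: "\<epsilon> > 0"
  shows "\<exists>P0::nat. \<forall>P\<ge>P0. \<exists>W A1 A2 B.
           \<forall>z0\<in>K. \<forall>z x. is_solution f T z0 z \<and> is_solution (neural_rhs P W A1 A2 B) T z0 x
             \<longrightarrow> (\<forall>t\<in>{0..T}. norm (z t - x t) \<le> \<epsilon>)"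
proof -
  obtain L where "0 < L" and L: "\<forall>x y. \<forall>t\<in>{0..T}. norm (f x t - f y t) \<le> L * norm (x - y)"
    using f_lip by blast
  have lip: "\<And>t. t \<in> {0..T} \<Longrightarrow> L-lipschitz_on UNIV (\<lambda>x. f x t)"
    using L \<open>0 < L\<close> by (intro lipschitz_onI) (auto simp: dist_norm)
  have f_joint: "continuous_on ({0..T} \<times> UNIV) (\<lambda>(t, x). f x t)"
    by (rule continuous_on_Times_if_lipschitz[OF f_cont lip])
  have f_K: "continuous_on ({0..T} \<times> K) (\<lambda>(t, x). f x t)"
    using f_joint by (rule continuous_on_subset) auto
  obtain R \<eta> where "0 < \<eta>" and stable: "\<forall>g. (\<forall>t\<in>{0..T}. \<forall>y\<in>cball 0 R. norm (f y t - g y t) \<le> \<eta>) \<longrightarrow>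
      (\<forall>z0\<in>K. \<forall>z x. is_solution f T z0 z \<and> is_solution g T z0 x \<longrightarrow> (\<forall>t\<in>{0..T}. norm (z t - x t) \<le> \<epsilon>))"
    using solutions_stable_under_rhs_perturbation[OF T_pos K_compact eps_pos f_K lip] by auto
  have "continuous_on ({0..T} \<times> cball 0 R) (\<lambda>(t, x). f x t)"
    using f_joint by (rule continuous_on_subset) auto
  from neural_rhs_uniform_approx[OF compact_Times[OF compact_Icc compact_cball] this \<open>0 < \<eta>\<close>]
  obtain P0 where P0: "\<forall>P\<ge>P0. \<exists>W A1 A2 B. \<forall>t\<in>{0..T}. \<forall>y\<in>cball 0 R.
      norm (f y t - neural_rhs P W A1 A2 B y t) \<le> \<eta>"
    by auto
  show ?thesis
  proof (rule exI[of _ P0], intro allI impI)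
    fix P assume "P0 \<le> P"
    then obtain W A1 A2 B where
      "\<forall>t\<in>{0..T}. \<forall>y\<in>cball 0 R. norm (f y t - neural_rhs P W A1 A2 B y t) \<le> \<eta>"
      using P0 by blast
    then show "\<exists>W A1 A2 B. \<forall>z0\<in>K. \<forall>z x. is_solution f T z0 z \<and> is_solution (neural_rhs P W A1 A2 B) T z0 x
        \<longrightarrow> (\<forall>t\<in>{0..T}. norm (z t - x t) \<le> \<epsilon>)"
      using stable by blast
  qed
qed

end
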